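(* Let $f:[0,1]\to\mathbb{R}$ be bounded and let $0<a<1$. Assume that $f(t)=c$ for all $t\in(a,1]$, for some real constant $c$. Then for every $n\in\mathbb{N}$ and every $x\in(a,1)$, \[ |B_nf(x)-f(x)|\leq \|f-c\|\,e^{-nr(x,a)}. \]
   Context: For a bounded function $f:[0,1]\to\mathbb{R}$, $\|f\|=\sup_{t\in[0,1]}|f(t)|$, and $\|f-c\|$ is the supremum norm of $t\mapsto f(t)-c$. The $n$th Bernstein polynomial of $f$ is $B_nf(x)=\sum_{j=0}^n f(j/n)\binom{n}{j}x^j(1-x)^{n-j}$, $x\in[0,1]$. For $x,\theta\in(0,1)$, $r(x,\theta)=\theta\log\frac{\theta}{x}+(1-\theta)\log\frac{1-\theta}{1-x}$. *)

theory Defs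
  imports "HOL-Analysis.Analysis"
begin

definition bernstein :: "nat \<Rightarrow> (real \<Rightarrow> real) \<Rightarrow> real \<Rightarrow> real" where
  "bernstein n f x = (\<Sum>j=0..n. f (real j / real n) * real (n choose j) * x ^ j * (1 - x) ^ (n - j))"

definition supnorm01 :: "(real \<Rightarrow> real) \<Rightarrow> real" where
  "supnorm01 f = (SUP t\<in>{0..1}. \<bar>f t\<bar>)"

definition rent :: "real \<Rightarrow> real \<Rightarrow> real" where
  "rent x \<theta> = \<theta> * ln (\<theta> / x) + (1 - \<theta>) * ln ((1 - \<theta>) / (1 - x))"

end

theory Submission
  imports Defs
begin

text \<open>Write \<open>B\<^sub>nf(x) - c = \<Sum>\<^sub>j (f(j/n) - c) p\<^sub>j(x)\<close> with the binomial weights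
  \<open>p\<^sub>j(x)\<close> of \<open>Bernstein\<close>. Only the indices \<open>j \<le> na\<close> contribute, so the error is at most
  \<open>\<parallel>f - c\<parallel>\<close> times the lower binomial tail \<open>P(S\<^sub>n \<le> na)\<close>.  Chernoff's bound estimates this tail
  by \<open>\<Sum>\<^sub>j z\<^bsup>j - na\<^esup> p\<^sub>j(x) = (z\<^bsup>-a\<^esup>(zx + 1 - x))\<^sup>n\<close> for every \<open>0 < z \<le> 1\<close>, and the optimal
  choice \<open>z = a(1 - x)/(x(1 - a))\<close> turns the base into \<open>exp(-r(x,a))\<close>.\<close>

lemma bernstein_eq_sum_Bernstein:
  "bernstein n f x = (\<Sum>j\<le>n. f (real j / real n) * Bernstein n j x)"
  unfolding bernstein_def Bernstein_def atLeast0AtMost by (simp add: mult.assoc)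

lemma bernstein_diff_const:
  "bernstein n (\<lambda>t. f t - c) x = bernstein n f x - c"
  unfolding bernstein_eq_sum_Bernstein
  by (simp add: left_diff_distrib sum_subtractf flip: sum_distrib_left)

lemma abs_le_supnorm01:
  assumes "bounded (f ` {0..1})" and "t \<in> {0..1}"
  shows "\<bar>f t\<bar> \<le> supnorm01 f"
  unfolding supnorm01_def
  using assms
  by (auto intro!: cSUP_upper bounded_imp_bdd_above simp: bounded_norm_comp[where f = f, symmetric])

lemma sum_powr_Bernstein:
  assumes "0 < z"
  shows "(\<Sum>j\<le>n. z powr (real j - s) * Bernstein n j x) = z powr (- s) * (z * x + (1 - x)) ^ n"
proof -
  have "z powr (real j - s) * Bernstein n j x
      = z powr (- s) * (real (n choose j) * (z * x) ^ j * (1 - x) ^ (n - j))" for j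
    using assms by (simp add: powr_diff powr_minus_divide powr_realpow Bernstein_def
        power_mult_distrib field_simps)
  then have "(\<Sum>j\<le>n. z powr (real j - s) * Bernstein n j x)
      = z powr (- s) * (\<Sum>j\<le>n. real (n choose j) * (z * x) ^ j * (1 - x) ^ (n - j))"
    by (simp add: sum_distrib_left)
  then show ?thesis
    by (simp add: binomial_ring)
qed

text \<open>Chernoff's bound for the lower tail: the weight \<open>z\<^bsup>j - na\<^esup>\<close> is at least \<open>1\<close> exactly
  on the indices \<open>j \<le> na\<close> that can contribute.\<close>

lemma abs_bernstein_le_Chernoff:
  assumes bound: "\<And>t. t \<in> {0..1} \<Longrightarrow> \<bar>g t\<bar> \<le> M"
    and vanish: "\<And>t. a < t \<Longrightarrow> t \<le> 1 \<Longrightarrow> g t = 0"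
    and x: "0 \<le> x" "x \<le> 1" and z: "0 < z" "z \<le> 1"
  shows "\<bar>bernstein n g x\<bar> \<le> M * (z powr (- a) * (z * x + (1 - x))) ^ n"
proof -
  have M: "0 \<le> M"
    using bound[of 0] by simp
  have term_le: "\<bar>g (real j / real n) * Bernstein n j x\<bar> \<le> M * (z powr (real j - n * a) * Bernstein n j x)"
    if "j \<le> n" for j
  proof (cases "real j / real n \<le> a")
    case True
    then have "real j \<le> n * a"
      using \<open>j \<le> n\<close> by (cases "n = 0") (auto simp: field_simps)
    then have "1 \<le> z powr (real j - n * a)"
      using z powr_mono'[of "real j - n * a" 0 z] by simp
    moreover have "\<bar>g (real j / real n)\<bar> \<le> M"
      using \<open>j \<le> n\<close> by (intro bound) (auto simp: divide_le_eq_1)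
    ultimately show ?thesis
      using M Bernstein_nonneg[OF x, of n j]
      by (simp add: abs_mult mult_mono mult_le_cancel_right1 order_trans)
  next
    case False
    then have "g (real j / real n) = 0"
      using \<open>j \<le> n\<close> by (intro vanish) (auto simp: divide_le_eq_1)
    with M z Bernstein_nonneg[OF x] show ?thesis by simp
  qed
  have "\<bar>bernstein n g x\<bar> \<le> (\<Sum>j\<le>n. M * (z powr (real j - n * a) * Bernstein n j x))"
    unfolding bernstein_eq_sum_Bernstein by (intro order_trans[OF sum_abs] sum_mono term_le) simp
  also have "\<dots> = M * (z powr (- (n * a)) * (z * x + (1 - x)) ^ n)"
    unfolding sum_distrib_left[symmetric] sum_powr_Bernstein[OF z(1)] ..
  also have "\<dots> = M * (z powr (- a) * (z * x + (1 - x))) ^ n"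
    using z by (simp add: power_mult_distrib powr_power)
  finally show ?thesis .
qed

lemma Chernoff_optimum_eq_exp_rent:
  fixes a x :: real
  assumes a: "0 < a" "a < 1" and x: "0 < x" "x < 1"
  defines "z \<equiv> a * (1 - x) / (x * (1 - a))"
  shows "z powr (- a) * (z * x + (1 - x)) = exp (- rent x a)"
proof -
  have z: "0 < z"
    using a x by (simp add: z_def)
  have base: "z * x + (1 - x) = (1 - x) / (1 - a)"
    using a x by (simp add: z_def field_simps)
  have ln_z: "ln z = ln a + ln (1 - x) - ln x - ln (1 - a)"
    using a x by (simp add: z_def ln_div ln_mult)
  have "ln (z powr (- a) * (z * x + (1 - x))) = - a * ln z + ln (1 - x) - ln (1 - a)"
    using a x z by (simp add: base ln_mult ln_div ln_powr)
  also have "\<dots> = - rent x a"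
    using a x by (simp add: ln_z rent_def ln_div algebra_simps)
  finally have "ln (z powr (- a) * (z * x + (1 - x))) = - rent x a" .
  moreover have "0 < z powr (- a) * (z * x + (1 - x))"
    using a x z by (simp add: base)
  ultimately show ?thesis
    by (metis exp_ln)
qed

theorem corollary2:
  fixes f :: "real \<Rightarrow> real" and a c x :: real and n :: nat
  assumes bdd: "bounded (f ` {0..1})"
    and a: "0 < a" "a < 1"
    and const: "\<And>t. a < t \<Longrightarrow> t \<le> 1 \<Longrightarrow> f t = c"
    and x: "a < x" "x < 1"
  shows "\<bar>bernstein n f x - f x\<bar> \<le> supnorm01 (\<lambda>t. f t - c) * exp (- real n * rent x a)"
proof -
  define z where "z = a * (1 - x) / (x * (1 - a))"
  have z: "0 < z" "z \<le> 1"
    using a x by (auto simp: z_def field_simps)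
  have "z powr (- a) * (z * x + (1 - x)) = exp (- rent x a)"
    unfolding z_def using a x by (intro Chernoff_optimum_eq_exp_rent) auto
  then have optimum: "(z powr (- a) * (z * x + (1 - x))) ^ n = exp (- real n * rent x a)"
    by (simp add: exp_of_nat_mult[symmetric])
  have "bounded ((\<lambda>t. f t - c) ` {0..1})"
    using bounded_translation_minus[OF bdd, of c] by (simp add: image_image)
  then have "\<bar>f t - c\<bar> \<le> supnorm01 (\<lambda>t. f t - c)" if "t \<in> {0..1}" for t
    using abs_le_supnorm01 that by fastforce
  then have "\<bar>bernstein n (\<lambda>t. f t - c) x\<bar>
      \<le> supnorm01 (\<lambda>t. f t - c) * (z powr (- a) * (z * x + (1 - x))) ^ n"
    using const a x z by (intro abs_bernstein_le_Chernoff) auto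
  moreover have "bernstein n f x - f x = bernstein n (\<lambda>t. f t - c) x"
    using const x by (simp add: bernstein_diff_const)
  ultimately show ?thesis
    by (simp add: optimum)
qed

end
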